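(* Let $\phi_M$ be a formula of MITL$(\Diamond)$ and $\phi_M'$ a formula of MITL$(\Box)$, and let $\phi_L=[\phi_M]_{LTL}$ and $\phi_L'=[\phi_M']_{LTL}$ be the LTL formulas obtained by deleting all interval subscripts. Then: (1) if $\phi_L$ is unsatisfiable, then $\phi_M$ is unsatisfiable; (2) if $\phi_L'$ is satisfiable, then $\phi_M'$ is satisfiable.
   Context: Fix $T\in\mathbb{R}_+$ and a set $AP$ of atomic propositions. A timed trace is a map $\mu:[0,T]\to 2^{AP}$ satisfying the finite variability condition. Fragments (all in negation normal form), with $p\in AP$ and $I$ a non-singleton right-closed interval over $\mathbb{Q}_+$ with defined endpoints: MITL$(\Box)$: $\varphi::=\top\mid\bot\mid p\mid\neg p\mid\varphi_1\wedge\varphi_2\mid\varphi_1\vee\varphi_2\mid\Box_I\varphi_1$; MITL$(\Diamond)$: same with $\Diamond_I\varphi_1$ in place of $\Box_I\varphi_1$; LTL$(\Box)$ and LTL$(\Diamond)$: same with unsubscripted $\Box\varphi_1$, resp. $\Diamond\varphi_1$. MITL semantics: $(\mu,t)\models p$ iff $p\in\mu(t)$, $\neg p$ iff $p\notin\mu(t)$, $\top$ always, $\bot$ never, $\wedge,\vee$ as usual, $(\mu,t)\models\Diamond_I\varphi$ iff $\exists t'\in(t+I)\cap[0,T]$ with $(\mu,t')\models\varphi$, $(\mu,t)\models\Box_I\varphi$ iff $\forall t'\in(t+I)\cap[0,T]$, $(\mu,t')\models\varphi$, where $t+[l,u]=[t+l,t+u]$. LTL (continuous, bounded) semantics: same propositional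 clauses, $(\mu,t)\models\Diamond\varphi$ iff $\exists t'\in[t,T]$ with $(\mu,t')\models\varphi$, $(\mu,t)\models\Box\varphi$ iff $\forall t'\in[t,T]$, $(\mu,t')\models\varphi$. $[\phi]_{LTL}$ replaces every $\Diamond_I$ by $\Diamond$ and every $\Box_I$ by $\Box$. $\mu\models\varphi$ iff $(\mu,0)\models\varphi$; a formula is satisfiable iff some timed trace satisfies it. *)

theory Defs
  imports Complex_Main
begin

text \<open>Intervals: (l, u, lc) denotes [l,u] if lc, and (l,u] otherwise; endpoints
  are non-negative rationals. Well-formed (non-singleton, right-closed,
  defined endpoints) means 0 \<le> l < u.\<close>
type_synonym interval = "rat \<times> rat \<times> bool"

definition wf_interval :: "interval \<Rightarrow> bool" where
  "wf_interval I = (case I of (l, u, lc) \<Rightarrow> 0 \<le> l \<and> l < u)"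

definition int_set :: "interval \<Rightarrow> real set" where
  "int_set I = (case I of (l, u, lc) \<Rightarrow>
     (if lc then {real_of_rat l .. real_of_rat u} else {real_of_rat l <.. real_of_rat u}))"

definition shift :: "real \<Rightarrow> interval \<Rightarrow> real set" where
  "shift t I = (\<lambda>x. t + x) ` int_set I"

datatype 'ap mitl =
    MTop | MBot | MProp 'ap | MNProp 'ap
  | MAnd "'ap mitl" "'ap mitl" | MOr "'ap mitl" "'ap mitl"
  | MBox interval "'ap mitl" | MDia interval "'ap mitl"

datatype 'ap ltl =
    LTop | LBot | LProp 'ap | LNProp 'ap
  | LAnd "'ap ltl" "'ap ltl" | LOr "'ap ltl" "'ap ltl"
  | LBox "'ap ltl" | LDia "'ap ltl"

fun is_mitl_box :: "'ap mitl \<Rightarrow> bool" where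
  "is_mitl_box MTop = True"
| "is_mitl_box MBot = True"
| "is_mitl_box (MProp p) = True"
| "is_mitl_box (MNProp p) = True"
| "is_mitl_box (MAnd a b) = (is_mitl_box a \<and> is_mitl_box b)"
| "is_mitl_box (MOr a b) = (is_mitl_box a \<and> is_mitl_box b)"
| "is_mitl_box (MBox I a) = (wf_interval I \<and> is_mitl_box a)"
| "is_mitl_box (MDia I a) = False"

fun is_mitl_dia :: "'ap mitl \<Rightarrow> bool" where
  "is_mitl_dia MTop = True"
| "is_mitl_dia MBot = True"
| "is_mitl_dia (MProp p) = True"
| "is_mitl_dia (MNProp p) = True"
| "is_mitl_dia (MAnd a b) = (is_mitl_dia a \<and> is_mitl_dia b)"
| "is_mitl_dia (MOr a b) = (is_mitl_dia a \<and> is_mitl_dia b)"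
| "is_mitl_dia (MBox I a) = False"
| "is_mitl_dia (MDia I a) = (wf_interval I \<and> is_mitl_dia a)"

fun to_ltl :: "'ap mitl \<Rightarrow> 'ap ltl" where
  "to_ltl MTop = LTop"
| "to_ltl MBot = LBot"
| "to_ltl (MProp p) = LProp p"
| "to_ltl (MNProp p) = LNProp p"
| "to_ltl (MAnd a b) = LAnd (to_ltl a) (to_ltl b)"
| "to_ltl (MOr a b) = LOr (to_ltl a) (to_ltl b)"
| "to_ltl (MBox I a) = LBox (to_ltl a)"
| "to_ltl (MDia I a) = LDia (to_ltl a)"

definition timed_trace :: "real \<Rightarrow> (real \<Rightarrow> 'ap set) \<Rightarrow> bool" where
  "timed_trace T \<mu> = (\<exists>S. finite S \<and>
     (\<forall>t1 t2. 0 \<le> t1 \<and> t1 \<le> t2 \<and> t2 \<le> T \<and> {t1..t2} \<inter> S = {} \<longrightarrow> \<mu> t1 = \<mu> t2))"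

fun msat :: "real \<Rightarrow> (real \<Rightarrow> 'ap set) \<Rightarrow> real \<Rightarrow> 'ap mitl \<Rightarrow> bool" where
  "msat T \<mu> t MTop = True"
| "msat T \<mu> t MBot = False"
| "msat T \<mu> t (MProp p) = (p \<in> \<mu> t)"
| "msat T \<mu> t (MNProp p) = (p \<notin> \<mu> t)"
| "msat T \<mu> t (MAnd a b) = (msat T \<mu> t a \<and> msat T \<mu> t b)"
| "msat T \<mu> t (MOr a b) = (msat T \<mu> t a \<or> msat T \<mu> t b)"
| "msat T \<mu> t (MDia I a) = (\<exists>t' \<in> shift t I \<inter> {0..T}. msat T \<mu> t' a)"
| "msat T \<mu> t (MBox I a) = (\<forall>t' \<in> shift t I \<inter> {0..T}. msat T \<mu> t' a)"

fun lsat :: "real \<Rightarrow> (real \<Rightarrow> 'ap set) \<Rightarrow> real \<Rightarrow> 'ap ltl \<Rightarrow> bool" where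
  "lsat T \<mu> t LTop = True"
| "lsat T \<mu> t LBot = False"
| "lsat T \<mu> t (LProp p) = (p \<in> \<mu> t)"
| "lsat T \<mu> t (LNProp p) = (p \<notin> \<mu> t)"
| "lsat T \<mu> t (LAnd a b) = (lsat T \<mu> t a \<and> lsat T \<mu> t b)"
| "lsat T \<mu> t (LOr a b) = (lsat T \<mu> t a \<or> lsat T \<mu> t b)"
| "lsat T \<mu> t (LDia a) = (\<exists>t' \<in> {t..T}. lsat T \<mu> t' a)"
| "lsat T \<mu> t (LBox a) = (\<forall>t' \<in> {t..T}. lsat T \<mu> t' a)"

definition msatisfiable :: "real \<Rightarrow> 'ap mitl \<Rightarrow> bool" where
  "msatisfiable T \<phi> = (\<exists>\<mu>. timed_trace T \<mu> \<and> msat T \<mu> 0 \<phi>)"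

definition lsatisfiable :: "real \<Rightarrow> 'ap ltl \<Rightarrow> bool" where
  "lsatisfiable T \<phi> = (\<exists>\<mu>. timed_trace T \<mu> \<and> lsat T \<mu> 0 \<phi>)"

end

theory Submission
  imports Defs
begin

text \<open>A well-formed interval has a non-negative lower endpoint, so \<open>t + I\<close> lies in
  the future of \<open>t\<close>. Hence \<open>\<Diamond>\<^sub>I \<psi>\<close> implies \<open>\<Diamond> \<psi>\<close> and \<open>\<Box> \<psi>\<close> implies \<open>\<Box>\<^sub>I \<psi>\<close>;
  since all other connectives are monotone, an induction on negation normal forms
  gives that every trace satisfying an MITL(\<open>\<Diamond>\<close>) formula satisfies its LTL
  abstraction, and every trace satisfying the LTL abstraction of an MITL(\<open>\<Box>\<close>) formula
  satisfies the formula itself.\<close>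

lemma ge_of_mem_shift:
  assumes "wf_interval I" and "x \<in> shift t I"
  shows "t \<le> x"
proof -
  obtain l u lc where I: "I = (l, u, lc)" by (cases I)
  from assms(2) obtain y where x: "x = t + y" and y: "y \<in> int_set I"
    by (auto simp: shift_def)
  have "0 \<le> real_of_rat l" using assms(1) I by (simp add: wf_interval_def)
  also have "real_of_rat l \<le> y" using y I by (auto simp: int_set_def split: if_splits)
  finally show ?thesis using x by simp
qed

lemma msat_imp_lsat_to_ltl_if_dia:
  "is_mitl_dia \<phi> \<Longrightarrow> msat T \<mu> t \<phi> \<Longrightarrow> lsat T \<mu> t (to_ltl \<phi>)"
proof (induction \<phi> arbitrary: t)
  case (MDia I \<psi>)
  then obtain t' where t': "t' \<in> shift t I" "t' \<le> T" and "msat T \<mu> t' \<psi>" by auto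
  then have "lsat T \<mu> t' (to_ltl \<psi>)" using MDia by simp
  moreover have "t \<le> t'" using MDia.prems(1) t'(1) by (auto intro: ge_of_mem_shift)
  ultimately show ?case using t'(2) by auto
qed auto

lemma lsat_to_ltl_imp_msat_if_box:
  "is_mitl_box \<phi> \<Longrightarrow> lsat T \<mu> t (to_ltl \<phi>) \<Longrightarrow> msat T \<mu> t \<phi>"
proof (induction \<phi> arbitrary: t)
  case (MBox I \<psi>)
  show ?case
  proof (simp, intro ballI)
    fix t' assume "t' \<in> shift t I \<inter> {0..T}"
    with MBox ge_of_mem_shift[of I t' t] show "msat T \<mu> t' \<psi>" by auto
  qed
qed auto

lemma msatisfiable_imp_lsatisfiable_to_ltl_if_dia:
  "is_mitl_dia \<phi> \<Longrightarrow> msatisfiable T \<phi> \<Longrightarrow> lsatisfiable T (to_ltl \<phi>)"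
  unfolding msatisfiable_def lsatisfiable_def
  using msat_imp_lsat_to_ltl_if_dia by blast

lemma lsatisfiable_to_ltl_imp_msatisfiable_if_box:
  "is_mitl_box \<phi> \<Longrightarrow> lsatisfiable T (to_ltl \<phi>) \<Longrightarrow> msatisfiable T \<phi>"
  unfolding msatisfiable_def lsatisfiable_def
  using lsat_to_ltl_imp_msat_if_box by blast

theorem theorem3:
  fixes T :: real and \<phi>M \<phi>M' :: "'ap mitl"
  assumes "0 \<le> T"
    and "is_mitl_dia \<phi>M" and "is_mitl_box \<phi>M'"
  shows "(\<not> lsatisfiable T (to_ltl \<phi>M) \<longrightarrow> \<not> msatisfiable T \<phi>M)
       \<and> (lsatisfiable T (to_ltl \<phi>M') \<longrightarrow> msatisfiable T \<phi>M')"
  using msatisfiable_imp_lsatisfiable_to_ltl_if_dia[OF assms(2)]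
    lsatisfiable_to_ltl_imp_msatisfiable_if_box[OF assms(3)]
  by blast

end
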